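(* For every nonnegative integer $n$, \[\sum_{r=0}^n\mathcal{K}_{n;r}(z;q)\Phi_r(1;z;q)=\Phi_n(1;z;q)\qquad\text{and}\qquad\sum_{r=0}^n\mathcal{K}_{n;r}(z/q;q)\Phi_r(u;z;q)=\Phi_n(uz;z;q).\]
   Context: $(a;q)_n=\prod_{j=0}^{n-1}(1-aq^j)$ for $n\ge0$ and $1/(q;q)_n=0$ for $n<0$; $(a,b;q)_n=(a;q)_n(b;q)_n$. For $n,r\in\mathbb{Z}$: \[\Phi_n(u;z;q):=\frac{1-uz-(1-u)zq^n}{(q;q)_n(z;q)_{n+1}},\qquad \mathcal{K}_{n;r}(z;q):=\frac{z^rq^{r^2}}{(q;q)_{n-r}}.\] (Note $\Phi_n(1;z;q)=1/(q,zq;q)_n$.) *)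

theory Defs
  imports "HOL-Analysis.Analysis"
begin

definition qpoch :: "complex \<Rightarrow> complex \<Rightarrow> nat \<Rightarrow> complex" where
  "qpoch a q n = (\<Prod>j<n. 1 - a * q ^ j)"

definition inv_qfact :: "complex \<Rightarrow> int \<Rightarrow> complex" where
  "inv_qfact q m = (if m < 0 then 0 else 1 / qpoch q q (nat m))"

definition Phi :: "nat \<Rightarrow> complex \<Rightarrow> complex \<Rightarrow> complex \<Rightarrow> complex" where
  "Phi n u z q = (1 - u * z - (1 - u) * z * q ^ n) / (qpoch q q n * qpoch z q (n + 1))"

definition Kc :: "nat \<Rightarrow> nat \<Rightarrow> complex \<Rightarrow> complex \<Rightarrow> complex" where
  "Kc n r z q = z ^ r * q ^ (r ^ 2) * inv_qfact q (int n - int r)"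

end

theory Submission
  imports Defs
begin

text \<open>
  Put D = (q;q)_n (z;q)_{n+1}. Factoring (q;q)_n through the Gaussian binomial [n,r] and
  (z;q)_{n+1} = (z;q)_{r+1} (zq^{r+1};q)_{n-r} turns the summand K_{n;r}(w;q) Phi_r(u;z;q) into
  [n,r] w^r q^{r^2} (zq^{r+1};q)_{n-r} times the numerator of Phi_r, over D. Everything then rests
  on the partition of unity sum_r [n,r] z^r q^{r^2} (zq^{r+1};q)_{n-r} = 1, proved by induction on n:
  the q-Pascal rule splits the weights for n+1 into those for n at z and at zq.
  For the second identity the numerator of Phi_r is (1 - zq^r) - uz(1 - q^r). The first part combines
  with (zq^{r+1};q)_{n-r} into the weight at z/q times (1 - zq^n); the second reduces, via
  [n,r](1 - q^r) = (1 - q^n)[n-1,r-1], to the partition of unity for n - 1 at zq.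
\<close>

lemma qpoch_0 [simp]: "qpoch a q 0 = 1"
  by (simp add: qpoch_def)

lemma qpoch_Suc: "qpoch a q (Suc m) = qpoch a q m * (1 - a * q ^ m)"
  by (simp add: qpoch_def)

lemma qpoch_add: "qpoch a q (m + k) = qpoch a q m * qpoch (a * q ^ m) q k"
  by (induction k) (simp_all add: qpoch_Suc power_add mult_ac)

lemma qpoch_Suc_left: "qpoch a q (Suc m) = (1 - a) * qpoch (a * q) q m"
  using qpoch_add [of a q 1 m] by (simp add: qpoch_def)

lemma qpoch_shift: "(1 - a) * qpoch (a * q) q m = qpoch a q m * (1 - a * q ^ m)"
  by (simp only: qpoch_Suc_left [symmetric] qpoch_Suc)

lemma qpoch_eq_0_iff: "qpoch a q n = 0 \<longleftrightarrow> (\<exists>j<n. a * q ^ j = 1)"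
  by (auto simp: qpoch_def prod_zero_iff)

lemma qpoch_nonzero_le: "qpoch a q n \<noteq> 0 \<Longrightarrow> k \<le> n \<Longrightarrow> qpoch a q k \<noteq> 0"
  by (auto simp: qpoch_eq_0_iff)

text \<open>The Gaussian binomial, defined by the q-Pascal rule so that no division by \<open>(q;q)\<^sub>k\<close> occurs.\<close>

fun qbinomial :: "complex \<Rightarrow> nat \<Rightarrow> nat \<Rightarrow> complex" where
  "qbinomial q 0 k = (if k = 0 then 1 else 0)"
| "qbinomial q (Suc n) 0 = 1"
| "qbinomial q (Suc n) (Suc k) = qbinomial q n (Suc k) + q ^ (n - k) * qbinomial q n k"

lemma qbinomial_eq_0: "n < k \<Longrightarrow> qbinomial q n k = 0"
  by (induction q n k rule: qbinomial.induct) auto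

lemma qbinomial_0_right [simp]: "qbinomial q n 0 = 1"
  by (cases n) auto

lemma qbinomial_self [simp]: "qbinomial q n n = 1"
  by (induction n) (simp_all add: qbinomial_eq_0)

lemma qbinomial_mult_qpochs:
  "k \<le> n \<Longrightarrow> qbinomial q n k * qpoch q q k * qpoch q q (n - k) = qpoch q q n"
proof (induction n arbitrary: k)
  case 0
  then show ?case by simp
next
  case (Suc n)
  show ?case
  proof (cases "k = 0 \<or> k = Suc n")
    case True
    then show ?thesis by (auto simp: qbinomial_eq_0)
  next
    case False
    then obtain j where k: "k = Suc j" and "j < n"
      using Suc.prems by (cases k) auto
    from less_imp_Suc_add [OF \<open>j < n\<close>] obtain d where n: "n = j + Suc d"
      by auto
    have IH1: "qbinomial q n (Suc j) * qpoch q q (Suc j) * qpoch q q d = qpoch q q n"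
      using Suc.IH [of "Suc j"] n by simp
    have IH2: "qbinomial q n j * qpoch q q j * qpoch q q (Suc d) = qpoch q q n"
      using Suc.IH [of j] n by simp
    have "qbinomial q (Suc n) k * qpoch q q k * qpoch q q (Suc n - k)
        = (qbinomial q n (Suc j) + q ^ Suc d * qbinomial q n j)
          * (qpoch q q j * (1 - q ^ Suc j)) * (qpoch q q d * (1 - q ^ Suc d))"
      using k n by (simp add: qpoch_Suc)
    also have "\<dots> = qbinomial q n (Suc j) * qpoch q q (Suc j) * qpoch q q d * (1 - q ^ Suc d)
        + q ^ Suc d * (qbinomial q n j * qpoch q q j * qpoch q q (Suc d)) * (1 - q ^ Suc j)"
      by (simp add: qpoch_Suc algebra_simps)
    also have "\<dots> = qpoch q q n * (1 - q ^ Suc d * q ^ Suc j)"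
      unfolding IH1 IH2 by (simp add: algebra_simps)
    also have "q ^ Suc d * q ^ Suc j = q ^ Suc n"
      using n by (simp add: add.commute flip: power_add)
    finally show ?thesis by (simp add: qpoch_Suc)
  qed
qed

lemma qbinomial_absorption:
  assumes "qpoch q q (Suc m) \<noteq> 0" and "s \<le> m"
  shows "qbinomial q (Suc m) (Suc s) * (1 - q ^ Suc s) = (1 - q ^ Suc m) * qbinomial q m s"
proof -
  have nonzero: "qpoch q q s * qpoch q q (m - s) \<noteq> 0"
    using qpoch_nonzero_le [OF assms(1)] assms(2) by simp
  have "qbinomial q (Suc m) (Suc s) * (1 - q ^ Suc s) * (qpoch q q s * qpoch q q (m - s))
      = qpoch q q (Suc m)"
    using qbinomial_mult_qpochs [of "Suc s" "Suc m" q] assms(2) by (simp add: qpoch_Suc algebra_simps)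
  also have "\<dots> = (1 - q ^ Suc m) * qbinomial q m s * (qpoch q q s * qpoch q q (m - s))"
    using qbinomial_mult_qpochs [of s m q] assms(2) by (simp add: qpoch_Suc algebra_simps)
  finally show ?thesis
    using nonzero by simp
qed

definition qweight :: "complex \<Rightarrow> nat \<Rightarrow> complex \<Rightarrow> nat \<Rightarrow> complex" where
  "qweight q n z r = qbinomial q n r * z ^ r * q ^ r\<^sup>2 * qpoch (z * q ^ (r + 1)) q (n - r)"

lemma qweight_Suc_0: "qweight q (Suc n) z 0 = (1 - z * q ^ Suc n) * qweight q n z 0"
  by (simp add: qweight_def qpoch_Suc algebra_simps)

lemma qweight_Suc_Suc:
  "qweight q (Suc n) z (Suc s) = (1 - z * q ^ Suc n) * qweight q n z (Suc s) + z * q ^ Suc n * qweight q n (z * q) s"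
proof -
  define X where "X = qpoch (z * q ^ (s + 2)) q"
  have first: "qbinomial q n (Suc s) * X (n - s) = qbinomial q n (Suc s) * X (n - Suc s) * (1 - z * q ^ Suc n)"
  proof (cases "s < n")
    case True
    then have "n - s = Suc (n - Suc s)" and "s + 2 + (n - Suc s) = Suc n"
      by simp_all
    then have "X (n - s) = X (n - Suc s) * (1 - z * q ^ Suc n)"
      unfolding X_def by (simp only: qpoch_Suc mult.assoc flip: power_add)
    then show ?thesis
      by simp
  qed (simp add: qbinomial_eq_0)
  have second: "q ^ (n - s) * q ^ (Suc s)\<^sup>2 * qbinomial q n s = q ^ Suc n * q ^ s * q ^ s\<^sup>2 * qbinomial q n s"
  proof (cases "s \<le> n")
    case True
    then have "n - s + (Suc s)\<^sup>2 = Suc n + s + s\<^sup>2"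
      by (simp add: power2_eq_square)
    then show ?thesis
      by (metis power_add)
  qed (simp add: qbinomial_eq_0)
  have "qweight q (Suc n) z (Suc s)
      = qbinomial q n (Suc s) * X (n - s) * z ^ Suc s * q ^ (Suc s)\<^sup>2
        + (q ^ (n - s) * q ^ (Suc s)\<^sup>2 * qbinomial q n s) * z ^ Suc s * X (n - s)"
    by (simp add: qweight_def X_def algebra_simps)
  also have "\<dots> = (1 - z * q ^ Suc n) * qweight q n z (Suc s) + z * q ^ Suc n * qweight q n (z * q) s"
    unfolding first second by (simp add: qweight_def X_def algebra_simps power_mult_distrib)
  finally show ?thesis .
qed

lemma sum_qweight: "(\<Sum>r=0..n. qweight q n z r) = 1"
proof (induction n arbitrary: z)
  case 0
  then show ?case by (simp add: qweight_def)
next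
  case (Suc n)
  define c where "c = z * q ^ Suc n"
  have "(\<Sum>r=0..Suc n. qweight q (Suc n) z r)
      = qweight q (Suc n) z 0 + (\<Sum>s=0..n. qweight q (Suc n) z (Suc s))"
    by (simp only: sum.atLeast0_atMost_Suc_shift o_def)
  also have "\<dots> = (1 - c) * (qweight q n z 0 + (\<Sum>s=0..n. qweight q n z (Suc s)))
      + c * (\<Sum>s=0..n. qweight q n (z * q) s)"
    by (simp add: c_def qweight_Suc_0 qweight_Suc_Suc sum.distrib sum_distrib_left distrib_left)
  also have "qweight q n z 0 + (\<Sum>s=0..n. qweight q n z (Suc s)) = (\<Sum>r=0..Suc n. qweight q n z r)"
    by (simp only: sum.atLeast0_atMost_Suc_shift o_def)
  also have "\<dots> = 1"
    using Suc.IH [of z] by (simp add: qweight_def qbinomial_eq_0)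
  finally show ?case
    using Suc.IH [of "z * q"] by simp
qed

lemma sum_one_minus_power_qweight:
  assumes "qpoch q q n \<noteq> 0"
  shows "(\<Sum>r=0..n. (1 - q ^ r) * qbinomial q n r * w ^ r * q ^ r\<^sup>2 * qpoch (w * q * q ^ (r + 1)) q (n - r))
    = (1 - q ^ n) * w * q"
proof (cases n)
  case 0
  then show ?thesis by simp
next
  case (Suc m)
  have "(\<Sum>r=0..n. (1 - q ^ r) * qbinomial q n r * w ^ r * q ^ r\<^sup>2 * qpoch (w * q * q ^ (r + 1)) q (n - r))
      = (\<Sum>s=0..m. (1 - q ^ Suc s) * qbinomial q (Suc m) (Suc s) * w ^ Suc s * q ^ (Suc s)\<^sup>2
          * qpoch (w * q * q ^ (Suc s + 1)) q (m - s))"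
    unfolding Suc by (simp only: sum.atLeast0_atMost_Suc_shift o_def) simp
  also have "\<dots> = (\<Sum>s=0..m. (1 - q ^ n) * w * q * qweight q m (w * q\<^sup>2) s)"
  proof (rule sum.cong [OF refl])
    fix s
    assume "s \<in> {0..m}"
    then have absorb: "(1 - q ^ Suc s) * qbinomial q (Suc m) (Suc s) = (1 - q ^ n) * qbinomial q m s"
      using qbinomial_absorption [of q m s] assms Suc by (simp add: mult.commute)
    have "(Suc s)\<^sup>2 = 1 + 2 * s + s\<^sup>2"
      by (simp add: power2_eq_square)
    then have pow: "w ^ Suc s * q ^ (Suc s)\<^sup>2 = w * q * (w * q\<^sup>2) ^ s * q ^ s\<^sup>2"
      by (simp add: power_add power_mult power_mult_distrib power2_eq_square)
    have "w * q * q ^ (Suc s + 1) = w * q\<^sup>2 * q ^ (s + 1)"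
      by (simp add: power_add power2_eq_square)
    then have "(1 - q ^ Suc s) * qbinomial q (Suc m) (Suc s) * w ^ Suc s * q ^ (Suc s)\<^sup>2
          * qpoch (w * q * q ^ (Suc s + 1)) q (m - s)
        = (1 - q ^ n) * qbinomial q m s * (w * q * (w * q\<^sup>2) ^ s * q ^ s\<^sup>2)
          * qpoch (w * q\<^sup>2 * q ^ (s + 1)) q (m - s)"
      by (simp only: absorb flip: pow mult.assoc)
    then show "(1 - q ^ Suc s) * qbinomial q (Suc m) (Suc s) * w ^ Suc s * q ^ (Suc s)\<^sup>2
          * qpoch (w * q * q ^ (Suc s + 1)) q (m - s) = (1 - q ^ n) * w * q * qweight q m (w * q\<^sup>2) s"
      by (simp add: qweight_def mult_ac)
  qed
  also have "\<dots> = (1 - q ^ n) * w * q"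
    by (simp add: sum_qweight flip: sum_distrib_left)
  finally show ?thesis .
qed

lemma Kc_mult_Phi:
  assumes "qpoch q q n \<noteq> 0" and "qpoch z q (n + 1) \<noteq> 0" and "r \<le> n"
  shows "Kc n r w q * Phi r u z q
    = qbinomial q n r * w ^ r * q ^ r\<^sup>2 * qpoch (z * q ^ (r + 1)) q (n - r)
      * (1 - u * z - (1 - u) * z * q ^ r) / (qpoch q q n * qpoch z q (n + 1))"
proof -
  have qfacts: "qbinomial q n r * qpoch q q r * qpoch q q (n - r) = qpoch q q n"
    using qbinomial_mult_qpochs assms(3) by blast
  have zpoch: "qpoch z q (r + 1) * qpoch (z * q ^ (r + 1)) q (n - r) = qpoch z q (n + 1)"
    using qpoch_add [of z q "r + 1" "n - r"] assms(3) by simp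
  have Kc: "Kc n r w q = w ^ r * q ^ r\<^sup>2 / qpoch q q (n - r)"
    using assms(3) by (simp add: Kc_def inv_qfact_def nat_diff_distrib)
  show ?thesis
    using assms(1,2) unfolding Kc Phi_def qfacts [symmetric] zpoch [symmetric] by (simp add: field_simps)
qed

lemma sum_Kc_mult_Phi_1:
  assumes "qpoch q q n \<noteq> 0" and "qpoch z q (n + 1) \<noteq> 0"
  shows "(\<Sum>r=0..n. Kc n r z q * Phi r 1 z q) = Phi n 1 z q"
proof -
  have "(\<Sum>r=0..n. Kc n r z q * Phi r 1 z q)
      = (\<Sum>r=0..n. qweight q n z r) * (1 - z) / (qpoch q q n * qpoch z q (n + 1))"
    unfolding sum_distrib_right sum_divide_distrib
    by (rule sum.cong [OF refl]) (simp add: Kc_mult_Phi [OF assms] qweight_def)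
  then show ?thesis
    by (simp add: Phi_def sum_qweight)
qed

lemma sum_Kc_div_mult_Phi:
  assumes "q \<noteq> 0" and "qpoch q q n \<noteq> 0" and "qpoch z q (n + 1) \<noteq> 0"
  shows "(\<Sum>r=0..n. Kc n r (z / q) q * Phi r u z q) = Phi n (u * z) z q"
proof -
  define D where "D = qpoch q q n * qpoch z q (n + 1)"
  define c where "c r = qbinomial q n r * (z / q) ^ r * q ^ r\<^sup>2" for r
  define X where "X r = qpoch (z * q ^ (r + 1)) q (n - r)" for r
  have "Kc n r (z / q) q * Phi r u z q
      = ((1 - z * q ^ n) * qweight q n (z / q) r - u * z * ((1 - q ^ r) * c r * X r)) / D"
    if "r \<le> n" for r
  proof -
    have "z / q * q ^ (r + 1) = z * q ^ r"
      using assms(1) by simp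
    then have weight: "qweight q n (z / q) r = c r * qpoch (z * q ^ r) q (n - r)"
      unfolding qweight_def c_def by simp
    have exps: "z * q ^ r * q = z * q ^ (r + 1)" "z * q ^ r * q ^ (n - r) = z * q ^ n"
      using that by (simp_all add: mult.assoc flip: power_add power_Suc2)
    have "Kc n r (z / q) q * Phi r u z q = (c r * ((1 - z * q ^ r) * X r) - u * z * ((1 - q ^ r) * c r * X r)) / D"
      unfolding c_def D_def X_def Kc_mult_Phi [OF assms(2,3) that] by (simp add: algebra_simps)
    also have "(1 - z * q ^ r) * X r = qpoch (z * q ^ r) q (n - r) * (1 - z * q ^ n)"
      using qpoch_shift [of "z * q ^ r" q "n - r", unfolded exps] by (simp add: X_def)
    finally show ?thesis
      unfolding weight by (simp add: mult_ac)
  qed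
  then have "(\<Sum>r=0..n. Kc n r (z / q) q * Phi r u z q)
      = ((1 - z * q ^ n) * (\<Sum>r=0..n. qweight q n (z / q) r)
         - u * z * (\<Sum>r=0..n. (1 - q ^ r) * c r * X r)) / D"
    by (simp add: sum_subtractf sum_distrib_left flip: sum_divide_distrib)
  also have "\<dots> = ((1 - z * q ^ n) - u * z * ((1 - q ^ n) * z)) / D"
    using sum_one_minus_power_qweight [OF assms(2), of "z / q"] assms(1)
    by (simp add: sum_qweight c_def X_def mult.assoc)
  finally show ?thesis
    by (simp add: Phi_def D_def algebra_simps)
qed

theorem lemma3p3:
  fixes n :: nat and u z q :: complex
  assumes "q \<noteq> 0"
    and "\<And>j. 1 \<le> j \<Longrightarrow> j \<le> n \<Longrightarrow> q ^ j \<noteq> 1"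
    and "\<And>j. j \<le> n \<Longrightarrow> z * q ^ j \<noteq> 1"
  shows "(\<Sum>r=0..n. Kc n r z q * Phi r 1 z q) = Phi n 1 z q \<and>
         (\<Sum>r=0..n. Kc n r (z / q) q * Phi r u z q) = Phi n (u * z) z q"
proof -
  have "qpoch q q n \<noteq> 0"
    using assms(2) [of "Suc _"] by (auto simp: qpoch_eq_0_iff)
  moreover have "qpoch z q (n + 1) \<noteq> 0"
    using assms(3) by (auto simp: qpoch_eq_0_iff)
  ultimately show ?thesis
    using sum_Kc_mult_Phi_1 sum_Kc_div_mult_Phi assms(1) by blast
qed

end
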